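(* $E^{\partial}_{FTP}$ is sound and complete for bisimilarity on $T(\Sigma^{\partial}_{FTP})$: for all closed $s,t\in T(\Sigma^{\partial}_{FTP})$, $E^{\partial}_{FTP}\vdash s=t$ if and only if $s\sim t$.
   Context: Fix a finite nonempty set $\mathcal A$ of actions, a finite set $\mathcal P$ of predicates, a subset $\mathcal P^I\subseteq\mathcal P$ of implicit predicates, and for each $P\in\mathcal P^I$ a set $\mathcal A_P\subseteq\mathcal A$. $\Sigma^\partial_{FTP}$ consists of $\delta$, constants $\kappa_P$ ($P\in\mathcal P$), prefixes $a.\_$ ($a\in\mathcal A$), binary $+$, and unary $\partial_{\mathcal B,\mathcal Q}$ for all $\mathcal B\subseteq\mathcal A$, $\mathcal Q\subseteq\mathcal P$. Semantics on closed terms: the least relations closed under: $a.x\xrightarrow{a}x$; $x\xrightarrow{a}x'\Rightarrow x+y\xrightarrow{a}x'$; $y\xrightarrow{a}y'\Rightarrow x+y\xrightarrow{a}y'$; $P\kappa_P$; $Px\Rightarrow P(x+y)$; $Py\Rightarrow P(x+y)$; $Px\Rightarrow P(a.x)$ for $P\in\mathcal P^I$, $a\in\mathcal A_P$; $x\xrightarrow{a}x'\Rightarrow\partial_{\mathcal B,\mathcal Q}(x)\xrightarrow{a}\partial_{\emptyset,\mathcal Q\cap\mathcal P^I}(x')$ if $a\notin\mathcal B$; $Px\Rightarrow P(\partial_{\mathcal B,\mathcal Q}(x))$ if $P\notin\mathcal Q$. Bisimulation: symmetric $R$ with $(s,t)\in R$, $s\xrightarrow{a}s'$ implying $t\xrightarrow{a}t'$,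 $(s',t')\in R$, and $Ps$ implying $Pt$; $\sim$ is the union of all bisimulations. $E^\partial_{FTP}$ consists of: $x+y=y+x$; $(x+y)+z=x+(y+z)$; $x+x=x$; $x+\delta=x$; $a.(x+\kappa_P)=a.(x+\kappa_P)+\kappa_P$ ($P\in\mathcal P^I$, $a\in\mathcal A_P$); $\partial_{\mathcal B,\mathcal Q}(\delta)=\delta$; $\partial_{\mathcal B,\mathcal Q}(\kappa_P)=\delta$ if $P\in\mathcal Q$; $\partial_{\mathcal B,\mathcal Q}(\kappa_P)=\kappa_P$ if $P\notin\mathcal Q$; $\partial_{\mathcal B,\mathcal Q}(a.x)=\sum_{P\notin\mathcal Q,\,P(a.x)}\kappa_P$ if $a\in\mathcal B$ (schema: for each closed instance of $x$ the sum ranges over predicates $P\notin\mathcal Q$ satisfied by $a.x$); $\partial_{\mathcal B,\mathcal Q}(a.x)=\partial_{\emptyset,\mathcal Q}(a.x)$ if $a\notin\mathcal B$; $\partial_{\emptyset,\mathcal Q}(a.x)=a.\partial_{\emptyset,\mathcal Q\cap\mathcal P^I}(x)$; $\partial_{\mathcal B,\mathcal Q}(x+y)=\partial_{\mathcal B,\mathcal Q}(x)+\partial_{\mathcal B,\mathcal Q}(y)$. $\vdash$ is derivability in equational logic. *)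

theory Defs
  imports Main
begin

datatype ('a, 'p) ftp =
    Delta
  | Kappa 'p
  | Pre 'a "('a, 'p) ftp"
  | Plus "('a, 'p) ftp" "('a, 'p) ftp"
  | Enc "'a set" "'p set" "('a, 'p) ftp"

inductive step :: "'p set \<Rightarrow> ('a, 'p) ftp \<Rightarrow> 'a \<Rightarrow> ('a, 'p) ftp \<Rightarrow> bool"
  for PI :: "'p set" where
  step_pre: "step PI (Pre a x) a x"
| step_plusL: "step PI x a x' \<Longrightarrow> step PI (Plus x y) a x'"
| step_plusR: "step PI y a y' \<Longrightarrow> step PI (Plus x y) a y'"
| step_enc: "step PI x a x' \<Longrightarrow> a \<notin> B \<Longrightarrow> step PI (Enc B Q x) a (Enc {} (Q \<inter> PI) x')"

inductive holds :: "'p set \<Rightarrow> ('p \<Rightarrow> 'a set) \<Rightarrow> 'p \<Rightarrow> ('a, 'p) ftp \<Rightarrow> bool"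
  for PI :: "'p set" and AP :: "'p \<Rightarrow> 'a set" where
  holds_kappa: "holds PI AP P (Kappa P)"
| holds_plusL: "holds PI AP P x \<Longrightarrow> holds PI AP P (Plus x y)"
| holds_plusR: "holds PI AP P y \<Longrightarrow> holds PI AP P (Plus x y)"
| holds_pre: "holds PI AP P x \<Longrightarrow> P \<in> PI \<Longrightarrow> a \<in> AP P \<Longrightarrow> holds PI AP P (Pre a x)"
| holds_enc: "holds PI AP P x \<Longrightarrow> P \<notin> Q \<Longrightarrow> holds PI AP P (Enc B Q x)"

definition is_bisimulation ::
  "'p set \<Rightarrow> ('p \<Rightarrow> 'a set) \<Rightarrow> (('a, 'p) ftp \<Rightarrow> ('a, 'p) ftp \<Rightarrow> bool) \<Rightarrow> bool" where
  "is_bisimulation PI AP R \<longleftrightarrow>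
     (\<forall>s t. R s t \<longrightarrow> R t s) \<and>
     (\<forall>s t. R s t \<longrightarrow>
        (\<forall>a s'. step PI s a s' \<longrightarrow> (\<exists>t'. step PI t a t' \<and> R s' t')) \<and>
        (\<forall>P. holds PI AP P s \<longrightarrow> holds PI AP P t))"

definition bisim :: "'p set \<Rightarrow> ('p \<Rightarrow> 'a set) \<Rightarrow> ('a, 'p) ftp \<Rightarrow> ('a, 'p) ftp \<Rightarrow> bool" where
  "bisim PI AP s t \<longleftrightarrow> (\<exists>R. is_bisimulation PI AP R \<and> R s t)"

fun sumK :: "'p list \<Rightarrow> ('a, 'p) ftp" where
  "sumK [] = Delta"
| "sumK [P] = Kappa P"
| "sumK (P # ps) = Plus (Kappa P) (sumK ps)"

inductive axiom :: "'p set \<Rightarrow> ('p \<Rightarrow> 'a set) \<Rightarrow> ('a, 'p) ftp \<Rightarrow> ('a, 'p) ftp \<Rightarrow> bool"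
  for PI :: "'p set" and AP :: "'p \<Rightarrow> 'a set" where
  ax_comm: "axiom PI AP (Plus x y) (Plus y x)"
| ax_assoc: "axiom PI AP (Plus (Plus x y) z) (Plus x (Plus y z))"
| ax_idem: "axiom PI AP (Plus x x) x"
| ax_delta: "axiom PI AP (Plus x Delta) x"
| ax_impl: "P \<in> PI \<Longrightarrow> a \<in> AP P \<Longrightarrow>
    axiom PI AP (Pre a (Plus x (Kappa P))) (Plus (Pre a (Plus x (Kappa P))) (Kappa P))"
| ax_enc_delta: "axiom PI AP (Enc B Q Delta) Delta"
| ax_enc_kappa_in: "P \<in> Q \<Longrightarrow> axiom PI AP (Enc B Q (Kappa P)) Delta"
| ax_enc_kappa_out: "P \<notin> Q \<Longrightarrow> axiom PI AP (Enc B Q (Kappa P)) (Kappa P)"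
| ax_enc_pre_in: "a \<in> B \<Longrightarrow> distinct ps \<Longrightarrow>
    set ps = {P. P \<notin> Q \<and> holds PI AP P (Pre a x)} \<Longrightarrow>
    axiom PI AP (Enc B Q (Pre a x)) (sumK ps)"
| ax_enc_pre_out: "a \<notin> B \<Longrightarrow> axiom PI AP (Enc B Q (Pre a x)) (Enc {} Q (Pre a x))"
| ax_enc_pre_empty: "axiom PI AP (Enc {} Q (Pre a x)) (Pre a (Enc {} (Q \<inter> PI) x))"
| ax_enc_plus: "axiom PI AP (Enc B Q (Plus x y)) (Plus (Enc B Q x) (Enc B Q y))"

inductive derivable :: "'p set \<Rightarrow> ('p \<Rightarrow> 'a set) \<Rightarrow> ('a, 'p) ftp \<Rightarrow> ('a, 'p) ftp \<Rightarrow> bool"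
  for PI :: "'p set" and AP :: "'p \<Rightarrow> 'a set" where
  der_ax: "axiom PI AP s t \<Longrightarrow> derivable PI AP s t"
| der_refl: "derivable PI AP s s"
| der_sym: "derivable PI AP s t \<Longrightarrow> derivable PI AP t s"
| der_trans: "derivable PI AP s t \<Longrightarrow> derivable PI AP t u \<Longrightarrow> derivable PI AP s u"
| der_pre: "derivable PI AP s t \<Longrightarrow> derivable PI AP (Pre a s) (Pre a t)"
| der_plus: "derivable PI AP s t \<Longrightarrow> derivable PI AP s' t' \<Longrightarrow>
    derivable PI AP (Plus s s') (Plus t t')"
| der_enc: "derivable PI AP s t \<Longrightarrow> derivable PI AP (Enc B Q s) (Enc B Q t)"

end

theory Submission
  imports Defs
begin

text \<open>Soundness holds because every axiom instance relates terms with the same transitions and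
  predicates, and bisimilarity is a congruence. For completeness, every term is provably equal
  to a saturated normal form: a sum of constants \<open>\<kappa>\<^sub>P\<close> and prefixes \<open>a.x\<close> with \<open>x\<close>
  again saturated, which contains \<open>\<kappa>\<^sub>P\<close> as a summand whenever it satisfies \<open>P\<close>; the axiom for
  implicit predicates makes predicates inherited through a prefix explicit. If two saturated
  normal forms are bisimilar, each summand of one is absorbed by the other (by induction on
  size, comparing matching prefixes), and mutual absorption \<open>t + s = t\<close>, \<open>s + t = s\<close> yields
  \<open>s = t\<close>.\<close>

inductive_simps step_Delta: "step PI Delta a y"
inductive_simps step_Kappa: "step PI (Kappa P) a y"
inductive_simps step_Pre: "step PI (Pre b x) a y"
inductive_simps step_Plus: "step PI (Plus x z) a y"
inductive_simps step_Enc: "step PI (Enc B Q x) a y"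
lemmas step_simps = step_Delta step_Kappa step_Pre step_Plus step_Enc

inductive_simps holds_Delta: "holds PI AP P Delta"
inductive_simps holds_Kappa: "holds PI AP P (Kappa P')"
inductive_simps holds_Pre: "holds PI AP P (Pre b x)"
inductive_simps holds_Plus: "holds PI AP P (Plus x z)"
inductive_simps holds_Enc: "holds PI AP P (Enc B Q x)"
lemmas holds_simps = holds_Delta holds_Kappa holds_Pre holds_Plus holds_Enc

text \<open>Only the finitely many predicates a term satisfies enter the sums of the axiom schema for
  \<open>\<partial>\<^sub>B\<^sub>,\<^sub>Q(a.x)\<close>.\<close>

lemma finite_holds: "finite {P. holds PI AP P t}"
proof (induction t)
  case (Pre a x)
  then show ?case by (rule rev_finite_subset) (auto simp: holds_Pre)
next
  case (Plus x y)
  then show ?case by (simp add: holds_Plus Collect_disj_eq)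
next
  case (Enc B Q x)
  then show ?case by (rule rev_finite_subset) (auto simp: holds_Enc)
qed (simp_all add: holds_simps)

lemma sumK_holds: "holds PI AP P (sumK ps) \<longleftrightarrow> P \<in> set ps"
  by (induction ps rule: sumK.induct) (auto simp: holds_simps)

lemma sumK_no_step: "\<not> step PI (sumK ps) a x"
  by (induction ps rule: sumK.induct) (auto simp: step_simps)

declare der_trans [trans]

context
  fixes PI :: "'p set" and AP :: "'p \<Rightarrow> 'a set"
begin

abbreviation provable :: "('a, 'p) ftp \<Rightarrow> ('a, 'p) ftp \<Rightarrow> bool" (infix "\<doteq>" 50) where
  "s \<doteq> t \<equiv> derivable PI AP s t"

abbreviation bisimilar :: "('a, 'p) ftp \<Rightarrow> ('a, 'p) ftp \<Rightarrow> bool" (infix "\<sim>" 50) where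
  "s \<sim> t \<equiv> bisim PI AP s t"

lemma bisim_sym: "s \<sim> t \<Longrightarrow> t \<sim> s"
  unfolding bisim_def is_bisimulation_def by blast

lemma bisim_step: "s \<sim> t \<Longrightarrow> step PI s a s' \<Longrightarrow> \<exists>t'. step PI t a t' \<and> s' \<sim> t'"
  unfolding bisim_def is_bisimulation_def by blast

lemma bisim_holds: "s \<sim> t \<Longrightarrow> holds PI AP P s \<Longrightarrow> holds PI AP P t"
  unfolding bisim_def is_bisimulation_def by blast

lemma bisim_coinduct:
  assumes "R s t"
    and sym: "\<And>x y. R x y \<Longrightarrow> R y x"
    and step: "\<And>x y a x'. R x y \<Longrightarrow> step PI x a x' \<Longrightarrow> \<exists>y'. step PI y a y' \<and> (R x' y' \<or> x' \<sim> y')"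
    and holds: "\<And>x y P. R x y \<Longrightarrow> holds PI AP P x \<Longrightarrow> holds PI AP P y"
  shows "s \<sim> t"
proof -
  have "is_bisimulation PI AP (\<lambda>x y. R x y \<or> x \<sim> y)"
    unfolding is_bisimulation_def
    using sym step holds bisim_sym bisim_step bisim_holds by blast
  then show ?thesis
    unfolding bisim_def using \<open>R s t\<close> by blast
qed

lemma bisim_refl: "s \<sim> s"
  by (rule bisim_coinduct[where R = "(=)"]) auto

lemma bisim_trans:
  assumes "s \<sim> t" "t \<sim> u"
  shows "s \<sim> u"
proof (rule bisim_coinduct[where R = "\<lambda>x z. \<exists>y. x \<sim> y \<and> y \<sim> z"])
  fix x z a x'
  assume "\<exists>y. x \<sim> y \<and> y \<sim> z" and "step PI x a x'"
  then show "\<exists>z'. step PI z a z' \<and> ((\<exists>y'. x' \<sim> y' \<and> y' \<sim> z') \<or> x' \<sim> z')"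
    by (meson bisim_step)
qed (use assms in \<open>auto intro: bisim_sym bisim_holds\<close>)

lemma bisim_match:
  assumes "\<And>a s'. step PI s a s' \<Longrightarrow> \<exists>t'. step PI t a t' \<and> s' \<sim> t'"
    and "\<And>a t'. step PI t a t' \<Longrightarrow> \<exists>s'. step PI s a s' \<and> s' \<sim> t'"
    and "\<And>P. holds PI AP P s \<longleftrightarrow> holds PI AP P t"
  shows "s \<sim> t"
  by (rule bisim_coinduct[where R = "\<lambda>x y. (x = s \<and> y = t) \<or> (x = t \<and> y = s)"])
    (use assms bisim_sym in blast)+

lemma bisim_same_behaviour:
  assumes "\<And>a s'. step PI s a s' \<longleftrightarrow> step PI t a s'"
    and "\<And>P. holds PI AP P s \<longleftrightarrow> holds PI AP P t"
  shows "s \<sim> t"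
  using assms bisim_match bisim_refl by blast

lemma bisim_Pre: "s \<sim> t \<Longrightarrow> Pre a s \<sim> Pre a t"
  by (rule bisim_match) (auto simp: step_simps holds_simps intro: bisim_holds bisim_sym)

lemma bisim_Plus: "s \<sim> t \<Longrightarrow> s' \<sim> t' \<Longrightarrow> Plus s s' \<sim> Plus t t'"
  by (rule bisim_match)
    (auto simp: step_simps holds_simps intro: bisim_holds bisim_sym dest: bisim_step,
      (meson bisim_step bisim_sym)+)

lemma bisim_Enc: "s \<sim> t \<Longrightarrow> Enc B Q s \<sim> Enc B Q t"
proof (rule bisim_coinduct[where R = "\<lambda>x y. \<exists>B Q s t. x = Enc B Q s \<and> y = Enc B Q t \<and> s \<sim> t"])
  fix x y a x'
  assume "\<exists>B Q s t. x = Enc B Q s \<and> y = Enc B Q t \<and> s \<sim> t" and "step PI x a x'"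
  then obtain B Q s t s' where "y = Enc B Q t" "s \<sim> t" "x' = Enc {} (Q \<inter> PI) s'"
      "step PI s a s'" "a \<notin> B"
    by (auto simp: step_Enc)
  moreover from this obtain t' where "step PI t a t'" "s' \<sim> t'"
    using bisim_step by blast
  ultimately show "\<exists>y'. step PI y a y' \<and>
      ((\<exists>B Q s t. x' = Enc B Q s \<and> y' = Enc B Q t \<and> s \<sim> t) \<or> x' \<sim> y')"
    by (blast intro: step_enc)
next
  fix x y P
  assume "\<exists>B Q s t. x = Enc B Q s \<and> y = Enc B Q t \<and> s \<sim> t" and "holds PI AP P x"
  then show "holds PI AP P y"
    by (auto simp: holds_Enc dest: bisim_holds)
qed (use bisim_sym in blast)+

lemma axiom_bisim: "axiom PI AP s t \<Longrightarrow> s \<sim> t"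
proof (induction rule: axiom.induct)
  case ax_enc_pre_in
  then show ?case
    by (intro bisim_same_behaviour) (auto simp: step_simps holds_simps sumK_holds sumK_no_step)
qed (intro bisim_same_behaviour; auto simp: step_simps holds_simps)+

lemma derivable_bisim: "s \<doteq> t \<Longrightarrow> s \<sim> t"
  by (induction rule: derivable.induct)
    (auto intro: axiom_bisim bisim_refl bisim_sym bisim_trans bisim_Pre bisim_Plus bisim_Enc)

fun summands :: "('a, 'p) ftp \<Rightarrow> ('a, 'p) ftp set" where
  "summands Delta = {}"
| "summands (Plus x y) = summands x \<union> summands y"
| "summands t = {t}"

lemma Pre_summand_step: "Pre a x \<in> summands t \<Longrightarrow> step PI t a x"
  by (induction t) (auto intro: step.intros)

lemma Kappa_summand_holds: "Kappa P \<in> summands t \<Longrightarrow> holds PI AP P t"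
  by (induction t) (auto intro: holds.intros)

lemma size_Pre_summand: "Pre a x \<in> summands t \<Longrightarrow> size x < size t"
  by (induction t) auto

lemma derivable_absorb_summand: "w \<in> summands t \<Longrightarrow> Plus t w \<doteq> t"
proof (induction t)
  case (Plus x y)
  show ?case
  proof (cases "w \<in> summands x")
    case True
    have "Plus (Plus x y) w \<doteq> Plus x (Plus y w)" by (rule der_ax, rule ax_assoc)
    also have "\<dots> \<doteq> Plus x (Plus w y)" by (rule der_plus[OF der_refl der_ax[OF ax_comm]])
    also have "\<dots> \<doteq> Plus (Plus x w) y" by (rule der_sym[OF der_ax[OF ax_assoc]])
    also have "\<dots> \<doteq> Plus x y" using Plus.IH(1)[OF True] by (rule der_plus[OF _ der_refl])
    finally show ?thesis .
  next
    case False
    with Plus.prems have "w \<in> summands y" by simp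
    have "Plus (Plus x y) w \<doteq> Plus x (Plus y w)" by (rule der_ax, rule ax_assoc)
    also have "\<dots> \<doteq> Plus x y" using Plus.IH(2)[OF \<open>w \<in> summands y\<close>] by (rule der_plus[OF der_refl])
    finally show ?thesis .
  qed
qed (auto intro: der_ax ax_idem)

lemma derivable_absorb_summands: "(\<And>w. w \<in> summands u \<Longrightarrow> Plus t w \<doteq> t) \<Longrightarrow> Plus t u \<doteq> t"
proof (induction u)
  case Delta
  show ?case by (rule der_ax[OF ax_delta])
next
  case (Plus u1 u2)
  have "Plus t (Plus u1 u2) \<doteq> Plus (Plus t u1) u2" by (rule der_sym[OF der_ax[OF ax_assoc]])
  also have "\<dots> \<doteq> Plus t u2" using Plus by (intro der_plus[OF _ der_refl]) auto
  also have "\<dots> \<doteq> t" using Plus by auto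
  finally show ?case .
qed auto

lemma derivable_absorb_derivable: "Plus t w \<doteq> t \<Longrightarrow> w \<doteq> w' \<Longrightarrow> Plus t w' \<doteq> t"
  by (rule der_trans[OF der_plus[OF der_refl der_sym]])

lemma derivable_mutual_absorb:
  assumes "Plus t s \<doteq> t" "Plus s t \<doteq> s"
  shows "s \<doteq> t"
proof -
  have "s \<doteq> Plus s t" using assms(2) by (rule der_sym)
  also have "\<dots> \<doteq> Plus t s" by (rule der_ax[OF ax_comm])
  also have "\<dots> \<doteq> t" by (rule assms(1))
  finally show ?thesis .
qed

definition kappa_closed :: "('a, 'p) ftp \<Rightarrow> bool" where
  "kappa_closed u \<longleftrightarrow> (\<forall>P. holds PI AP P u \<longrightarrow> Kappa P \<in> summands u)"

fun normal :: "('a, 'p) ftp \<Rightarrow> bool" where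
  "normal Delta = True"
| "normal (Kappa P) = True"
| "normal (Pre a x) = (normal x \<and> kappa_closed x)"
| "normal (Plus x y) = (normal x \<and> normal y)"
| "normal (Enc B Q x) = False"

definition saturated :: "('a, 'p) ftp \<Rightarrow> bool" where
  "saturated u \<longleftrightarrow> normal u \<and> kappa_closed u"

lemma step_Pre_summand: "step PI t a t' \<Longrightarrow> normal t \<Longrightarrow> Pre a t' \<in> summands t"
  by (induction rule: step.induct) auto

lemma normal_summand_cases:
  "w \<in> summands u \<Longrightarrow> normal u \<Longrightarrow> (\<exists>P. w = Kappa P) \<or> (\<exists>a x. w = Pre a x \<and> saturated x)"
  by (induction u) (auto simp: saturated_def)

lemma saturated_holds_Kappa_summand:
  "saturated u \<Longrightarrow> holds PI AP P u \<Longrightarrow> Kappa P \<in> summands u"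
  by (simp add: saturated_def kappa_closed_def)

lemma saturated_Delta: "saturated Delta"
  by (simp add: saturated_def kappa_closed_def holds_simps)

lemma saturated_Kappa: "saturated (Kappa P)"
  by (simp add: saturated_def kappa_closed_def holds_simps)

lemma saturated_Plus: "saturated x \<Longrightarrow> saturated y \<Longrightarrow> saturated (Plus x y)"
  by (auto simp: saturated_def kappa_closed_def holds_Plus)

lemma summands_sumK: "summands (sumK ps) = Kappa ` set ps"
  by (induction ps rule: sumK.induct) auto

lemma saturated_sumK: "saturated (sumK ps)"
proof -
  have "normal (sumK ps)"
    by (induction ps rule: sumK.induct) auto
  then show ?thesis
    by (auto simp: saturated_def kappa_closed_def sumK_holds summands_sumK)
qed

lemma saturated_absorb_summand:
  assumes sat: "saturated s" "saturated t" and "s \<sim> t" and w: "w \<in> summands s"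
    and IH: "\<And>a x y. Pre a x \<in> summands s \<Longrightarrow> Pre a y \<in> summands t \<Longrightarrow> x \<sim> y \<Longrightarrow> x \<doteq> y"
  shows "Plus t w \<doteq> t"
proof -
  have "normal s" "normal t" using sat by (auto simp: saturated_def)
  from normal_summand_cases[OF w \<open>normal s\<close>] show ?thesis
  proof (elim disjE exE conjE)
    fix P assume "w = Kappa P"
    then have "holds PI AP P t"
      using Kappa_summand_holds w bisim_holds[OF \<open>s \<sim> t\<close>] by simp
    then have "Kappa P \<in> summands t" by (rule saturated_holds_Kappa_summand[OF sat(2)])
    with \<open>w = Kappa P\<close> show ?thesis by (simp add: derivable_absorb_summand)
  next
    fix a x assume wx: "w = Pre a x"
    then obtain y where y: "step PI t a y" "x \<sim> y"
      using Pre_summand_step[of a x s] w bisim_step[OF \<open>s \<sim> t\<close>] by blast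
    have yt: "Pre a y \<in> summands t" by (rule step_Pre_summand[OF y(1) \<open>normal t\<close>])
    have "Pre a y \<doteq> Pre a x" using IH[of a x y] w wx yt y(2) by (blast intro: der_pre der_sym)
    with derivable_absorb_summand[OF yt] show ?thesis
      unfolding wx by (rule derivable_absorb_derivable)
  qed
qed

lemma saturated_bisim_derivable: "saturated s \<Longrightarrow> saturated t \<Longrightarrow> s \<sim> t \<Longrightarrow> s \<doteq> t"
proof (induction "size s + size t" arbitrary: s t rule: less_induct)
  \<comment> \<open>Measuring both terms makes the hypothesis available for the absorption in either direction.\<close>
  case less
  have IH: "x \<doteq> y" if "Pre a x \<in> summands s" "Pre b y \<in> summands t" "x \<sim> y" for a b x y
  proof -
    have "normal s" "normal t" using less.prems by (auto simp: saturated_def)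
    then have "saturated x" "saturated y"
      using normal_summand_cases that by blast+
    moreover have "size x + size y < size s + size t"
      using size_Pre_summand that by (meson add_strict_mono)
    ultimately show ?thesis using less.hyps \<open>x \<sim> y\<close> by blast
  qed
  have IH_sym: "y \<doteq> x" if "Pre a y \<in> summands t" "Pre b x \<in> summands s" "y \<sim> x" for a b x y
    using IH[OF that(2,1) bisim_sym[OF that(3)]] by (rule der_sym)
  have "Plus t s \<doteq> t"
    by (rule derivable_absorb_summands, rule saturated_absorb_summand)
      (use less.prems IH in auto)
  moreover have "Plus s t \<doteq> s"
    by (rule derivable_absorb_summands, rule saturated_absorb_summand)
      (use less.prems IH_sym bisim_sym in auto)
  ultimately show ?case by (rule derivable_mutual_absorb)
qed

lemma saturate_Pre:
  assumes "saturated x"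
  shows "\<exists>w. saturated w \<and> Pre a x \<doteq> w"
proof -
  have "finite {P. P \<in> PI \<and> a \<in> AP P \<and> holds PI AP P x}"
    by (rule rev_finite_subset[OF finite_holds[of PI AP x]]) blast
  then obtain ps where ps: "distinct ps" "set ps = {P. P \<in> PI \<and> a \<in> AP P \<and> holds PI AP P x}"
    using finite_distinct_list by blast
  have absorb_Kappa: "Plus (Pre a x) (Kappa P) \<doteq> Pre a x" if "P \<in> set ps" for P
  proof -
    have P: "P \<in> PI" "a \<in> AP P" "holds PI AP P x" using that ps by auto
    have x: "Plus x (Kappa P) \<doteq> x"
      by (rule derivable_absorb_summand, rule saturated_holds_Kappa_summand[OF assms P(3)])
    have "Plus (Pre a x) (Kappa P) \<doteq> Plus (Pre a (Plus x (Kappa P))) (Kappa P)"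
      by (rule der_plus[OF der_pre[OF der_sym[OF x]] der_refl])
    also have "\<dots> \<doteq> Pre a (Plus x (Kappa P))"
      by (rule der_sym[OF der_ax[OF ax_impl[where AP = AP and P = P and a = a, OF P(1,2)]]])
    also have "\<dots> \<doteq> Pre a x"
      by (rule der_pre[OF x])
    finally show ?thesis .
  qed
  have "Plus (Pre a x) (sumK ps) \<doteq> Pre a x"
    by (rule derivable_absorb_summands) (auto simp: summands_sumK intro: absorb_Kappa)
  moreover have "saturated (Plus (Pre a x) (sumK ps))"
    unfolding saturated_def kappa_closed_def
  proof (intro conjI allI impI)
    show "normal (Plus (Pre a x) (sumK ps))"
      using assms saturated_sumK[of ps] by (simp add: saturated_def)
  next
    fix P assume "holds PI AP P (Plus (Pre a x) (sumK ps))"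
    then have "P \<in> set ps" using ps(2) by (auto simp: holds_Plus holds_Pre sumK_holds)
    then show "Kappa P \<in> summands (Plus (Pre a x) (sumK ps))" by (simp add: summands_sumK)
  qed
  ultimately show ?thesis by (blast intro: der_sym)
qed

lemma saturate_Enc: "normal u \<Longrightarrow> \<exists>v. saturated v \<and> Enc B Q u \<doteq> v"
proof (induction u arbitrary: B Q)
  case Delta
  have "Enc B Q Delta \<doteq> Delta" by (rule der_ax[OF ax_enc_delta])
  then show ?case using saturated_Delta by blast
next
  case (Kappa P)
  show ?case
  proof (cases "P \<in> Q")
    case True
    then have "Enc B Q (Kappa P) \<doteq> Delta" by (rule der_ax[OF ax_enc_kappa_in])
    then show ?thesis using saturated_Delta by blast
  next
    case False
    then have "Enc B Q (Kappa P) \<doteq> Kappa P" by (rule der_ax[OF ax_enc_kappa_out])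
    then show ?thesis using saturated_Kappa by blast
  qed
next
  case (Pre a x)
  show ?case
  proof (cases "a \<in> B")
    case True
    have "finite {P. P \<notin> Q \<and> holds PI AP P (Pre a x)}"
      by (rule rev_finite_subset[OF finite_holds[of PI AP "Pre a x"]]) blast
    then obtain ps where "distinct ps" "set ps = {P. P \<notin> Q \<and> holds PI AP P (Pre a x)}"
      using finite_distinct_list by blast
    then have "Enc B Q (Pre a x) \<doteq> sumK ps" by (rule der_ax[OF ax_enc_pre_in[OF True]])
    then show ?thesis using saturated_sumK by blast
  next
    case False
    have "normal x" using Pre.prems by simp
    then obtain v where v: "saturated v" "Enc {} (Q \<inter> PI) x \<doteq> v" using Pre.IH by blast
    then obtain w where w: "saturated w" "Pre a v \<doteq> w" using saturate_Pre by blast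
    have "Enc B Q (Pre a x) \<doteq> Enc {} Q (Pre a x)" by (rule der_ax[OF ax_enc_pre_out[OF False]])
    also have "\<dots> \<doteq> Pre a (Enc {} (Q \<inter> PI) x)" by (rule der_ax[OF ax_enc_pre_empty])
    also have "\<dots> \<doteq> Pre a v" by (rule der_pre[OF v(2)])
    also have "\<dots> \<doteq> w" by (rule w(2))
    finally show ?thesis using w(1) by blast
  qed
next
  case (Plus x y)
  then obtain v1 v2 where v: "saturated v1" "Enc B Q x \<doteq> v1" "saturated v2" "Enc B Q y \<doteq> v2"
    by (meson normal.simps(4))
  have "Enc B Q (Plus x y) \<doteq> Plus (Enc B Q x) (Enc B Q y)" by (rule der_ax[OF ax_enc_plus])
  also have "\<dots> \<doteq> Plus v1 v2" by (rule der_plus[OF v(2,4)])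
  finally show ?case using saturated_Plus[OF v(1,3)] by blast
qed simp

lemma saturate: "\<exists>u. saturated u \<and> s \<doteq> u"
proof (induction s)
  case (Pre a x)
  then obtain u w where "x \<doteq> u" "saturated w" "Pre a u \<doteq> w"
    using saturate_Pre by blast
  then show ?case by (blast intro: der_trans der_pre)
next
  case (Plus x y)
  then show ?case by (blast intro: saturated_Plus der_plus)
next
  case (Enc B Q x)
  then obtain u v where "x \<doteq> u" "saturated v" "Enc B Q u \<doteq> v"
    using saturate_Enc saturated_def by blast
  then show ?case by (blast intro: der_trans der_enc)
qed (use saturated_Delta saturated_Kappa der_refl in blast)+

theorem derivable_iff_bisim: "s \<doteq> t \<longleftrightarrow> s \<sim> t"
proof
  assume "s \<sim> t"
  obtain u v where u: "saturated u" "s \<doteq> u" and v: "saturated v" "t \<doteq> v"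
    using saturate by blast
  have "u \<sim> v"
    using derivable_bisim[OF der_sym[OF u(2)]] \<open>s \<sim> t\<close> derivable_bisim[OF v(2)]
    by (blast intro: bisim_trans)
  then have "u \<doteq> v" using u(1) v(1) by (rule saturated_bisim_derivable[rotated 2])
  then show "s \<doteq> t" using u(2) v(2) by (blast intro: der_trans der_sym)
qed (rule derivable_bisim)

end

theorem corollary1:
  fixes PI :: "'p::finite set" and AP :: "'p \<Rightarrow> 'a::finite set"
    and s t :: "('a, 'p) ftp"
  shows "derivable PI AP s t \<longleftrightarrow> bisim PI AP s t"
  by (rule derivable_iff_bisim)

end
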